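(* Let $\Gamma$ be a connected, non-complete distance-regular graph with fundamental group $G$ (as defined in the context), let $m,n>1$ be integers, and let $\rho: G\to S_{mn}$ be a transitive permutation representation such that $G\rho$ is imprimitive with $m$ blocks of imprimitivity, each of size $n$. Suppose that the associated cover $\Gamma_\rho$ is a distance-regular antipodal $mn$-cover of $\Gamma$. Let $\sigma: G\to S_m$ be the transitive action of $G\rho$ on its $m$ blocks of imprimitivity. Then $\Gamma_\rho$ is an $n$-cover of the $m$-cover $\Gamma_\sigma$ of $\Gamma$, and $\Gamma_\sigma$ is an antipodal distance-regular $m$-cover of $\Gamma$.
   Context: All graphs are finite, undirected, without loops or multiple edges. A graph $\Gamma$ is viewed as an abstract 2-dimensional simplicial complex whose 0-, 1-, 2-simplices are its vertices, edges and triangles. A cover of $\Gamma$ is a pair $(\tilde\Gamma,\theta)$ with $\tilde\Gamma$ a graph and $\theta:V(\tilde\Gamma)\to V(\Gamma)$ a surjection such that: each fibre $v\theta^{-1}$ is a coclique; the union of two distinct fibres over a non-edge of $\Gamma$ is a coclique; the subgraph induced on two fibres over an edge of $\Gamma$ is a perfect matching; the subgraph induced on three fibres over a triangle of $\Gamma$ is a disjoint union of triangles. It is an $r$-cover if all fibres have size $r$. For non-complete $\Gamma$, an antipodal $r$-cover is a connected $r$-cover $\tilde\Gamma$ in which "equal or at maximum distance in $\tilde\Gamma$" is an equivalence relation on $V(\tilde\Gamma)$ whose classes are the fibres. Fundamental group: fix a spanning tree $T$ of the connected graph $\Gamma$. $G$ is the group generated by symbols $g_{v,w}$, one for each ordered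 pair $(v,w)$ with $\{v,w\}$ an edge, subject to the relations $g_{s,t}=1$ for each arc $(s,t)$ of $T$, $g_{v,w}g_{w,v}=1$ for each edge $\{v,w\}$, and $g_{x,y}g_{y,z}g_{z,x}=1$ for each triangle $\{x,y,z\}$ (its isomorphism type does not depend on $T$). For a transitive permutation representation $\rho:G\to S_r$ (acting on $\{1,\dots,r\}$ on the right), the cover $\Gamma_\rho$ has vertex set $V(\Gamma)\times\{1,\dots,r\}$, covering map $(v,i)\mapsto v$, and $(v,i)\sim(w,j)$ iff $\{v,w\}\in E(\Gamma)$ and $j=i\,(g_{v,w}\rho)$; it is a connected $r$-cover of $\Gamma$. If $G\rho$ has blocks $B_1,\dots,B_m$ and $\sigma$ is the action on blocks, then $\Gamma_\rho$ is an $n$-cover of $\Gamma_\sigma$ via $(v,i)\mapsto (v,k)$ where $i\in B_k$. *)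

theory Defs
  imports Main
begin

definition graph :: "'a set \<Rightarrow> ('a \<Rightarrow> 'a \<Rightarrow> bool) \<Rightarrow> bool" where
  "graph V E \<longleftrightarrow> finite V \<and> (\<forall>x y. E x y \<longrightarrow> x \<in> V \<and> y \<in> V)
     \<and> (\<forall>x y. E x y \<longrightarrow> E y x) \<and> (\<forall>x. \<not> E x x)"

inductive walk_len :: "('a \<Rightarrow> 'a \<Rightarrow> bool) \<Rightarrow> nat \<Rightarrow> 'a \<Rightarrow> 'a \<Rightarrow> bool" for E where
  walk_nil: "walk_len E 0 x x"
| walk_cons: "E x y \<Longrightarrow> walk_len E n y z \<Longrightarrow> walk_len E (Suc n) x z"

definition gconnected :: "'a set \<Rightarrow> ('a \<Rightarrow> 'a \<Rightarrow> bool) \<Rightarrow> bool" where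
  "gconnected V E \<longleftrightarrow> V \<noteq> {} \<and> (\<forall>x\<in>V. \<forall>y\<in>V. \<exists>k. walk_len E k x y)"

definition gdist :: "('a \<Rightarrow> 'a \<Rightarrow> bool) \<Rightarrow> 'a \<Rightarrow> 'a \<Rightarrow> nat" where
  "gdist E x y = (LEAST k. walk_len E k x y)"

definition diameter :: "'a set \<Rightarrow> ('a \<Rightarrow> 'a \<Rightarrow> bool) \<Rightarrow> nat" where
  "diameter V E = Max {gdist E x y | x y. x \<in> V \<and> y \<in> V}"

definition complete_graph :: "'a set \<Rightarrow> ('a \<Rightarrow> 'a \<Rightarrow> bool) \<Rightarrow> bool" where
  "complete_graph V E \<longleftrightarrow> (\<forall>x\<in>V. \<forall>y\<in>V. x \<noteq> y \<longrightarrow> E x y)"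

text \<open>Distance-regular (Brouwer--Cohen--Neumaier): connected, and for vertices x, y at
  distance i the numbers c_i = |Gamma_{i-1}(x) \<inter> Gamma(y)| and
  b_i = |Gamma_{i+1}(x) \<inter> Gamma(y)| depend only on i.\<close>

definition sphere :: "'a set \<Rightarrow> ('a \<Rightarrow> 'a \<Rightarrow> bool) \<Rightarrow> nat \<Rightarrow> 'a \<Rightarrow> 'a set" where
  "sphere V E i x = {z \<in> V. gdist E x z = i}"

definition distance_regular :: "'a set \<Rightarrow> ('a \<Rightarrow> 'a \<Rightarrow> bool) \<Rightarrow> bool" where
  "distance_regular V E \<longleftrightarrow> graph V E \<and> gconnected V E \<and>
     (\<forall>x\<in>V. \<forall>y\<in>V. \<forall>x'\<in>V. \<forall>y'\<in>V. gdist E x y = gdist E x' y' \<longrightarrow>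
        card (sphere V E (gdist E x y - 1) x \<inter> {z. E y z})
          = card (sphere V E (gdist E x' y' - 1) x' \<inter> {z. E y' z})
      \<and> card (sphere V E (gdist E x y + 1) x \<inter> {z. E y z})
          = card (sphere V E (gdist E x' y' + 1) x' \<inter> {z. E y' z}))"

definition coclique :: "('a \<Rightarrow> 'a \<Rightarrow> bool) \<Rightarrow> 'a set \<Rightarrow> bool" where
  "coclique E S \<longleftrightarrow> (\<forall>x\<in>S. \<forall>y\<in>S. \<not> E x y)"

definition perfect_matching_on :: "('a \<Rightarrow> 'a \<Rightarrow> bool) \<Rightarrow> 'a set \<Rightarrow> bool" where
  "perfect_matching_on E S \<longleftrightarrow> (\<forall>x\<in>S. card {y\<in>S. E x y} = 1)"

definition triangles_on :: "('a \<Rightarrow> 'a \<Rightarrow> bool) \<Rightarrow> 'a set \<Rightarrow> bool" where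
  "triangles_on E S \<longleftrightarrow> (\<forall>x\<in>S. card {y\<in>S. E x y} = 2 \<and>
      (\<forall>y\<in>S. \<forall>z\<in>S. E x y \<and> E x z \<and> y \<noteq> z \<longrightarrow> E y z))"

definition fibre :: "'b set \<Rightarrow> ('b \<Rightarrow> 'a) \<Rightarrow> 'a \<Rightarrow> 'b set" where
  "fibre V' \<theta> v = {x \<in> V'. \<theta> x = v}"

definition is_cover :: "'a set \<Rightarrow> ('a \<Rightarrow> 'a \<Rightarrow> bool) \<Rightarrow> 'b set \<Rightarrow> ('b \<Rightarrow> 'b \<Rightarrow> bool)
    \<Rightarrow> ('b \<Rightarrow> 'a) \<Rightarrow> bool" where
  "is_cover V E V' E' \<theta> \<longleftrightarrow> graph V E \<and> graph V' E' \<and> \<theta> ` V' = V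
     \<and> (\<forall>v\<in>V. coclique E' (fibre V' \<theta> v))
     \<and> (\<forall>v\<in>V. \<forall>w\<in>V. v \<noteq> w \<and> \<not> E v w \<longrightarrow> coclique E' (fibre V' \<theta> v \<union> fibre V' \<theta> w))
     \<and> (\<forall>v w. E v w \<longrightarrow> perfect_matching_on E' (fibre V' \<theta> v \<union> fibre V' \<theta> w))
     \<and> (\<forall>x y z. E x y \<and> E y z \<and> E x z \<longrightarrow>
          triangles_on E' (fibre V' \<theta> x \<union> fibre V' \<theta> y \<union> fibre V' \<theta> z))"

definition r_cover :: "'a set \<Rightarrow> ('a \<Rightarrow> 'a \<Rightarrow> bool) \<Rightarrow> 'b set \<Rightarrow> ('b \<Rightarrow> 'b \<Rightarrow> bool)
    \<Rightarrow> ('b \<Rightarrow> 'a) \<Rightarrow> nat \<Rightarrow> bool" where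
  "r_cover V E V' E' \<theta> r \<longleftrightarrow> is_cover V E V' E' \<theta> \<and> (\<forall>v\<in>V. card (fibre V' \<theta> v) = r)"

text \<open>Antipodal r-cover of a non-complete graph: connected r-cover in which
  "equal or at maximum distance" is an equivalence relation whose classes are the fibres
  (i.e. it coincides with "same fibre").\<close>
definition antipodal_cover :: "'a set \<Rightarrow> ('a \<Rightarrow> 'a \<Rightarrow> bool) \<Rightarrow> 'b set \<Rightarrow> ('b \<Rightarrow> 'b \<Rightarrow> bool)
    \<Rightarrow> ('b \<Rightarrow> 'a) \<Rightarrow> nat \<Rightarrow> bool" where
  "antipodal_cover V E V' E' \<theta> r \<longleftrightarrow> \<not> complete_graph V E \<and> r_cover V E V' E' \<theta> r
     \<and> gconnected V' E'
     \<and> (\<forall>x\<in>V'. \<forall>y\<in>V'. (x = y \<or> gdist E' x y = diameter V' E') \<longleftrightarrow> \<theta> x = \<theta> y)"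

definition spanning_tree :: "'a set \<Rightarrow> ('a \<Rightarrow> 'a \<Rightarrow> bool) \<Rightarrow> 'a set set \<Rightarrow> bool" where
  "spanning_tree V E T \<longleftrightarrow> T \<subseteq> {{v, w} | v w. E v w}
     \<and> gconnected V (\<lambda>x y. {x, y} \<in> T) \<and> card T = card V - 1"

text \<open>A permutation representation rho : G \<rightarrow> S_r of the fundamental group G (given by
  the presentation in the paper) is, by the universal property of presentations, the
  same as an assignment of permutations pi v w = g_{v,w} rho of {0..<r} to the
  generators satisfying the defining relations (right action: i \<cdot> (gh) = (i \<cdot> g) \<cdot> h).\<close>
definition fg_rep :: "'a set \<Rightarrow> ('a \<Rightarrow> 'a \<Rightarrow> bool) \<Rightarrow> 'a set set \<Rightarrow> nat
    \<Rightarrow> ('a \<Rightarrow> 'a \<Rightarrow> nat \<Rightarrow> nat) \<Rightarrow> bool" where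
  "fg_rep V E T r \<pi> \<longleftrightarrow>
     (\<forall>v w. E v w \<longrightarrow> bij_betw (\<pi> v w) {0..<r} {0..<r})
   \<and> (\<forall>s t. {s, t} \<in> T \<longrightarrow> (\<forall>i<r. \<pi> s t i = i))
   \<and> (\<forall>v w. E v w \<longrightarrow> (\<forall>i<r. \<pi> w v (\<pi> v w i) = i))
   \<and> (\<forall>x y z. E x y \<and> E y z \<and> E z x \<longrightarrow> (\<forall>i<r. \<pi> z x (\<pi> y z (\<pi> x y i)) = i))"

definition transitive_rep :: "('a \<Rightarrow> 'a \<Rightarrow> bool) \<Rightarrow> nat \<Rightarrow> ('a \<Rightarrow> 'a \<Rightarrow> nat \<Rightarrow> nat) \<Rightarrow> bool" where
  "transitive_rep E r \<pi> \<longleftrightarrow>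
     (\<forall>i<r. \<forall>j<r. (i, j) \<in> {(k, \<pi> v w k) | k v w. k < r \<and> E v w}\<^sup>*)"

definition cover_graph :: "'a set \<Rightarrow> ('a \<Rightarrow> 'a \<Rightarrow> bool) \<Rightarrow> nat \<Rightarrow> ('a \<Rightarrow> 'a \<Rightarrow> nat \<Rightarrow> nat)
    \<Rightarrow> ('a \<times> nat) \<Rightarrow> ('a \<times> nat) \<Rightarrow> bool" where
  "cover_graph V E r \<pi> = (\<lambda>(v, i) (w, j). v \<in> V \<and> w \<in> V \<and> i < r \<and> j < r \<and> E v w \<and> j = \<pi> v w i)"

end

theory Submission
  imports Defs
begin

text \<open>Let \<open>D\<close> be the diameter of the antipodal distance-regular cover \<open>\<Gamma>\<^sub>\<rho>\<close>. Seen from a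
  vertex \<open>a\<close>, every antipodal class has exactly one vertex at some distance \<open>h \<le> D/2\<close> and all
  others at distance \<open>D - h\<close>. The map \<open>\<Gamma>\<^sub>\<rho> \<rightarrow> \<Gamma>\<^sub>\<sigma>\<close> collapsing blocks is itself a cover,
  so distances in \<open>\<Gamma>\<^sub>\<sigma>\<close> are minima of distances between fibres, and the number of
  vertices of a block at distance \<open>s\<close> from \<open>a\<close> is a function \<open>g(j, s)\<close> of the distance \<open>j\<close>
  between the image of \<open>a\<close> and the block. Double counting the edges between the block over
  \<open>Y\<close> and its neighbourhood shows that \<open>\<Sum>\<^bsub>Z \<sim> Y\<^esub> g(d(X, Z), s)\<close> depends only on
  \<open>d(X, Y)\<close> and the intersection numbers of \<open>\<Gamma>\<^sub>\<rho>\<close>; since \<open>g\<close> is triangular with positive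
  diagonal, the numbers of neighbours of \<open>Y\<close> at each distance from \<open>X\<close> depend only on
  \<open>d(X, Y)\<close>, i.e. \<open>\<Gamma>\<^sub>\<sigma>\<close> is distance-regular. Antipodality passes down because a distance
  in \<open>\<Gamma>\<^sub>\<sigma>\<close> is realised by a pair of vertices of \<open>\<Gamma>\<^sub>\<rho>\<close>.\<close>

section \<open>Walks and distances\<close>

lemma walk_len_0_iff [simp]: "walk_len E 0 x y \<longleftrightarrow> x = y"
  by (auto elim: walk_len.cases intro: walk_len.intros)

lemma walk_len_Suc_iff: "walk_len E (Suc k) x z \<longleftrightarrow> (\<exists>y. E x y \<and> walk_len E k y z)"
  by (auto elim: walk_len.cases intro: walk_len.intros)

lemma walk_len_snoc: "walk_len E k x y \<Longrightarrow> E y z \<Longrightarrow> walk_len E (Suc k) x z"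
  by (induction rule: walk_len.induct) (auto intro: walk_len.intros)

lemma walk_len_append: "walk_len E a x y \<Longrightarrow> walk_len E b y z \<Longrightarrow> walk_len E (a + b) x z"
  by (induction rule: walk_len.induct) (auto intro: walk_len.intros)

lemma walk_len_add_split:
  "walk_len E (a + b) x z \<Longrightarrow> \<exists>y. walk_len E a x y \<and> walk_len E b y z"
proof (induction a arbitrary: x)
  case (Suc a)
  then obtain y where "E x y" "walk_len E (a + b) y z" by (auto simp: walk_len_Suc_iff)
  moreover obtain u where "walk_len E a y u" "walk_len E b u z"
    using Suc.IH \<open>walk_len E (a + b) y z\<close> by blast
  ultimately show ?case by (auto simp: walk_len_Suc_iff)
qed simp

lemma walk_len_map:
  assumes "\<And>x y. E x y \<Longrightarrow> F (f x) (f y)"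
  shows "walk_len E k x y \<Longrightarrow> walk_len F k (f x) (f y)"
  by (induction rule: walk_len.induct) (auto intro: walk_len.intros assms)

lemma gdist_le_walk_len: "walk_len E k x y \<Longrightarrow> gdist E x y \<le> k"
  unfolding gdist_def by (rule Least_le)

lemma gdist_self [simp]: "gdist E x x = 0"
  using gdist_le_walk_len[OF walk_len.walk_nil] by simp

locale connected_graph =
  fixes V :: "'a set" and E :: "'a \<Rightarrow> 'a \<Rightarrow> bool"
  assumes graph: "graph V E" and connected: "gconnected V E"
begin

lemma finite_V: "finite V" and edge_sym: "E x y \<Longrightarrow> E y x" and edge_irrefl: "\<not> E x x"
  and edge_in_V: "E x y \<Longrightarrow> x \<in> V \<and> y \<in> V"
  using graph by (auto simp: graph_def)

lemma V_nonempty: "V \<noteq> {}"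
  using connected by (simp add: gconnected_def)

lemma finite_nbrs: "finite {z. E y z}"
  by (rule finite_subset[OF _ finite_V]) (auto dest: edge_in_V)

lemma walk_len_sym: "walk_len E k x y \<Longrightarrow> walk_len E k y x"
  by (induction rule: walk_len.induct) (simp_all add: walk_len_snoc edge_sym)

lemma walk_len_in_V: "walk_len E k x y \<Longrightarrow> x \<in> V \<Longrightarrow> y \<in> V"
  by (induction rule: walk_len.induct) (auto dest: edge_in_V)

lemma walk_len_gdist: "x \<in> V \<Longrightarrow> y \<in> V \<Longrightarrow> walk_len E (gdist E x y) x y"
  unfolding gdist_def by (rule LeastI_ex) (use connected in \<open>auto simp: gconnected_def\<close>)

lemma gdist_commute: "x \<in> V \<Longrightarrow> y \<in> V \<Longrightarrow> gdist E x y = gdist E y x"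
  using gdist_le_walk_len[OF walk_len_sym[OF walk_len_gdist]] by (simp add: le_antisym)

lemma gdist_triangle:
  "x \<in> V \<Longrightarrow> y \<in> V \<Longrightarrow> z \<in> V \<Longrightarrow> gdist E x z \<le> gdist E x y + gdist E y z"
  using gdist_le_walk_len[OF walk_len_append[OF walk_len_gdist walk_len_gdist]] by simp

lemma gdist_eq_0_iff: "x \<in> V \<Longrightarrow> y \<in> V \<Longrightarrow> gdist E x y = 0 \<longleftrightarrow> x = y"
  using walk_len_gdist[of x y] by (auto simp del: walk_len_0_iff)
    (metis walk_len_0_iff)

lemma gdist_edge: "E x y \<Longrightarrow> gdist E x y = 1"
proof -
  assume "E x y"
  then have "gdist E x y \<le> 1" "gdist E x y \<noteq> 0"
    using gdist_le_walk_len[of E 1 x y] edge_in_V edge_irrefl gdist_eq_0_iff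
    by (auto intro: walk_len.intros simp: walk_len_Suc_iff)
  then show ?thesis by simp
qed

lemma gdist_eq_1_imp_edge: "x \<in> V \<Longrightarrow> y \<in> V \<Longrightarrow> gdist E x y = 1 \<Longrightarrow> E x y"
  using walk_len_gdist[of x y] by (auto simp: walk_len_Suc_iff One_nat_def)

lemma gdist_edge_le: "x \<in> V \<Longrightarrow> E y z \<Longrightarrow> gdist E x z \<le> gdist E x y + 1"
  by (metis edge_in_V gdist_edge gdist_triangle)

lemma gdist_nbr_cases:
  assumes "x \<in> V" "E y z"
  shows "gdist E x z \<in> {gdist E x y - 1, gdist E x y, gdist E x y + 1}"
  using gdist_edge_le[OF assms] gdist_edge_le[OF assms(1) edge_sym[OF assms(2)]] by auto

lemma sphere_inter_nbrs: "sphere V E s x \<inter> {z. E y z} = {z \<in> {z. E y z}. gdist E x z = s}"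
  unfolding sphere_def using edge_in_V by blast

lemma gdist_le_diameter: "x \<in> V \<Longrightarrow> y \<in> V \<Longrightarrow> gdist E x y \<le> diameter V E"
  unfolding diameter_def by (rule Max_ge) (auto intro!: finite_image_set2 finite_V)

lemma diameter_attained: "\<exists>x\<in>V. \<exists>y\<in>V. gdist E x y = diameter V E"
proof -
  have "diameter V E \<in> {gdist E x y | x y. x \<in> V \<and> y \<in> V}"
    unfolding diameter_def
    by (rule Max_in) (use finite_V V_nonempty in \<open>auto intro!: finite_image_set2\<close>)
  then show ?thesis by fastforce
qed

lemma diameter_eqI:
  assumes "\<And>x y. x \<in> V \<Longrightarrow> y \<in> V \<Longrightarrow> gdist E x y \<le> k" and "x \<in> V" "y \<in> V" "gdist E x y = k"
  shows "diameter V E = k"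
proof -
  obtain a b where ab: "a \<in> V" "b \<in> V" "gdist E a b = diameter V E"
    using diameter_attained by blast
  show ?thesis using assms(1)[OF ab(1,2)] ab(3) gdist_le_diameter[OF assms(2,3)] assms(4) by linarith
qed

lemma exists_gdist_between:
  assumes "x \<in> V" "y \<in> V" "t \<le> gdist E x y"
  shows "\<exists>u\<in>V. gdist E x u = t \<and> gdist E u y = gdist E x y - t"
proof -
  have "walk_len E (t + (gdist E x y - t)) x y" using walk_len_gdist assms by simp
  then obtain u where u: "walk_len E t x u" "walk_len E (gdist E x y - t) u y"
    by (blast dest: walk_len_add_split)
  have "u \<in> V" using walk_len_in_V u(1) assms(1) by blast
  moreover have "gdist E x y \<le> gdist E x u + gdist E u y"
    using gdist_triangle assms \<open>u \<in> V\<close> by blast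
  moreover have "gdist E x u \<le> t" "gdist E u y \<le> gdist E x y - t"
    using u by (simp_all add: gdist_le_walk_len)
  ultimately show ?thesis using assms(3) by (intro bexI[of _ u]) auto
qed

lemma gdist_hom_le:
  assumes "\<And>x y. E x y \<Longrightarrow> F (f x) (f y)" and "x \<in> V" "y \<in> V"
  shows "gdist F (f x) (f y) \<le> gdist E x y"
  using gdist_le_walk_len[OF walk_len_map[where F = F, OF assms(1) walk_len_gdist[OF assms(2,3)]]] .

lemma gconnected_hom_image:
  assumes "\<And>x y. E x y \<Longrightarrow> F (f x) (f y)"
  shows "gconnected (f ` V) F"
  unfolding gconnected_def
proof (intro conjI ballI)
  fix a b assume "a \<in> f ` V" "b \<in> f ` V"
  then obtain x y where "x \<in> V" "y \<in> V" "a = f x" "b = f y" by blast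
  then have "walk_len F (gdist E x y) a b"
    using walk_len_map[where F = F, OF assms walk_len_gdist] by simp
  then show "\<exists>k. walk_len F k a b" ..
qed (use V_nonempty in blast)

end

lemma card_1_mem_eq: "card S = 1 \<Longrightarrow> x \<in> S \<Longrightarrow> S = {x}"
  by (metis card_1_singletonE singletonD)

lemma card_2_mem_eq: "card S = 2 \<Longrightarrow> x \<in> S \<Longrightarrow> y \<in> S \<Longrightarrow> x \<noteq> y \<Longrightarrow> S = {x, y}"
  by (auto simp: card_2_iff)

lemma sum_comp_by_value:
  assumes "finite A" "finite U" "\<delta> ` A \<subseteq> U"
  shows "(\<Sum>x\<in>A. f (\<delta> x)) = (\<Sum>u\<in>U. card {x \<in> A. \<delta> x = u} * f u)"
proof -
  have "(\<Sum>x\<in>A. f (\<delta> x)) = (\<Sum>u\<in>U. \<Sum>x\<in>{x \<in> A. \<delta> x = u}. f (\<delta> x))"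
    using sum.group[OF assms, of "\<lambda>x. f (\<delta> x)"] by simp
  also have "\<dots> = (\<Sum>u\<in>U. card {x \<in> A. \<delta> x = u} * f u)"
    by (rule sum.cong) simp_all
  finally show ?thesis .
qed

lemma card_eq_if_triangular_sums_eq:
  fixes g :: "nat \<Rightarrow> nat \<Rightarrow> nat" and \<delta> :: "'a \<Rightarrow> nat" and \<delta>' :: "'b \<Rightarrow> nat"
  assumes fin: "finite A" "finite A'"
    and triangular: "\<And>i s. s < i \<Longrightarrow> g i s = 0" and diag: "\<And>i. 0 < g i i"
    and sums: "\<And>s. (\<Sum>x\<in>A. g (\<delta> x) s) = (\<Sum>x\<in>A'. g (\<delta>' x) s)"
  shows "card {x \<in> A. \<delta> x = k} = card {x \<in> A'. \<delta>' x = k}"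
proof -
  have expand: "(\<Sum>x\<in>B. g (\<beta> x) s) = (\<Sum>i<Suc s. card {x \<in> B. \<beta> x = i} * g i s)"
    if "finite B" for B :: "'c set" and \<beta> s
  proof -
    have "\<forall>x\<in>B - {x \<in> B. \<beta> x < Suc s}. g (\<beta> x) s = 0"
      using triangular by (simp add: not_less_eq)
    then have "(\<Sum>x\<in>B. g (\<beta> x) s) = (\<Sum>x\<in>{x \<in> B. \<beta> x < Suc s}. g (\<beta> x) s)"
      using that by (intro sum.mono_neutral_right) auto
    also have "\<dots> = (\<Sum>i<Suc s. card {x \<in> {x \<in> B. \<beta> x < Suc s}. \<beta> x = i} * g i s)"
      using that by (intro sum_comp_by_value) auto
    also have "\<dots> = (\<Sum>i<Suc s. card {x \<in> B. \<beta> x = i} * g i s)"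
      by (intro sum.cong refl arg_cong2[where f = "(*)"] arg_cong[where f = card]) auto
    finally show ?thesis .
  qed
  show ?thesis
  proof (induction k rule: less_induct)
    case (less k)
    have "(\<Sum>i<k. card {x \<in> A. \<delta> x = i} * g i k) = (\<Sum>i<k. card {x \<in> A'. \<delta>' x = i} * g i k)"
      using less.IH by simp
    moreover have "(\<Sum>i<Suc k. card {x \<in> A. \<delta> x = i} * g i k)
        = (\<Sum>i<Suc k. card {x \<in> A'. \<delta>' x = i} * g i k)"
      using sums[of k] unfolding expand[OF fin(1)] expand[OF fin(2)] .
    ultimately show ?case using diag[of k] by simp
  qed
qed

section \<open>Distance-regular graphs\<close>

locale distance_regular_graph =
  fixes V :: "'a set" and E :: "'a \<Rightarrow> 'a \<Rightarrow> bool"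
  assumes distance_regular: "distance_regular V E"

sublocale distance_regular_graph \<subseteq> connected_graph
  using distance_regular by unfold_locales (simp_all add: distance_regular_def)

context distance_regular_graph
begin

lemma card_sphere_nbrs_pred_succ_eq:
  assumes "x \<in> V" "y \<in> V" "x' \<in> V" "y' \<in> V" "gdist E x y = gdist E x' y'"
  shows "card (sphere V E (gdist E x y - 1) x \<inter> {z. E y z})
           = card (sphere V E (gdist E x' y' - 1) x' \<inter> {z. E y' z})"
    and "card (sphere V E (gdist E x y + 1) x \<inter> {z. E y z})
           = card (sphere V E (gdist E x' y' + 1) x' \<inter> {z. E y' z})"
  using distance_regular assms unfolding distance_regular_def by blast+

lemma card_nbrs_eq: "y \<in> V \<Longrightarrow> y' \<in> V \<Longrightarrow> card {z. E y z} = card {z. E y' z}"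
proof -
  have nbrs: "{z. E y z} = sphere V E (gdist E y y + 1) y \<inter> {z. E y z}" for y
    using gdist_edge by (auto simp: sphere_inter_nbrs)
  assume "y \<in> V" "y' \<in> V"
  then show ?thesis
    using card_sphere_nbrs_pred_succ_eq(2)[of y y y' y'] by (subst (1 2) nbrs) simp
qed

lemma card_nbrs_split:
  assumes "x \<in> V" "y \<in> V" "gdist E x y = Suc t"
  shows "card {z. E y z} = card (sphere V E t x \<inter> {z. E y z})
      + card (sphere V E (Suc t) x \<inter> {z. E y z}) + card (sphere V E (Suc (Suc t)) x \<inter> {z. E y z})"
proof -
  have "card {z. E y z} = (\<Sum>z\<in>{z. E y z}. (\<lambda>_. 1::nat) (gdist E x z))"
    by simp
  also have "\<dots> = (\<Sum>s\<in>{t, Suc t, Suc (Suc t)}. card {z \<in> {z. E y z}. gdist E x z = s} * 1)"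
    using gdist_nbr_cases[OF assms(1), of y] assms(3) finite_nbrs
    by (intro sum_comp_by_value) auto
  finally show ?thesis by (simp add: sphere_inter_nbrs)
qed

text \<open>The numbers \<open>|\<Gamma>\<^sub>s(a) \<inter> \<Gamma>(b)|\<close> depend only on \<open>d(a, b)\<close>: for
  \<open>s = d(a, b) \<plusminus> 1\<close> this is the definition, for \<open>s = d(a, b)\<close> it follows from regularity,
  and otherwise they vanish.\<close>

lemma card_sphere_nbrs_eq:
  assumes "a \<in> V" "b \<in> V" "a' \<in> V" "b' \<in> V" and eq: "gdist E a b = gdist E a' b'"
  shows "card (sphere V E s a \<inter> {z. E b z}) = card (sphere V E s a' \<inter> {z. E b' z})"
proof -
  define t where "t = gdist E a b"
  have t': "gdist E a' b' = t" using eq by (simp add: t_def)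
  consider (adjacent) "s = t - 1 \<or> s = t + 1" | (middle) u where "t = Suc u" "s = t"
    | (far) "s \<notin> {t - 1, t, t + 1}"
    by (cases "s = t - 1 \<or> s = t + 1"; cases t) auto
  then show ?thesis
  proof cases
    case adjacent
    then show ?thesis using card_sphere_nbrs_pred_succ_eq[OF assms] t_def eq by auto
  next
    case (middle u)
    have "gdist E a b = Suc u" "gdist E a' b' = Suc u" using middle(1) t_def t' by simp_all
    then show ?thesis
      using card_nbrs_split[OF assms(1,2)] card_nbrs_split[OF assms(3,4)]
        card_nbrs_eq[OF assms(2,4)] card_sphere_nbrs_pred_succ_eq[OF assms] middle
      by simp
  next
    case far
    have "sphere V E s x \<inter> {z. E y z} = {}" if "x \<in> V" "gdist E x y = t" for x y
    proof -
      have "gdist E x z \<noteq> s" if "E y z" for z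
        using gdist_nbr_cases[OF \<open>x \<in> V\<close> that] \<open>gdist E x y = t\<close> far by auto
      then show ?thesis by (auto simp: sphere_inter_nbrs)
    qed
    from this[OF assms(1) t_def[symmetric]] this[OF assms(3) t'] show ?thesis by simp
  qed
qed

text \<open>The intersection number \<open>p\<^sup>u\<^sub>s\<^sub>1\<close>; it is arbitrary when no two vertices are
  at distance \<open>u\<close>.\<close>

definition intersection_number :: "nat \<Rightarrow> nat \<Rightarrow> nat" where
  "intersection_number u s = (SOME k. \<exists>a\<in>V. \<exists>b\<in>V. gdist E a b = u \<and>
      k = card (sphere V E s a \<inter> {z. E b z}))"

lemma card_sphere_nbrs_intersection_number:
  assumes "a \<in> V" "b \<in> V"
  shows "card (sphere V E s a \<inter> {z. E b z}) = intersection_number (gdist E a b) s"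
proof -
  let ?P = "\<lambda>k. \<exists>a'\<in>V. \<exists>b'\<in>V. gdist E a' b' = gdist E a b \<and>
      k = card (sphere V E s a' \<inter> {z. E b' z})"
  have "?P (card (sphere V E s a \<inter> {z. E b z}))" using assms by blast
  then have "?P (intersection_number (gdist E a b) s)"
    unfolding intersection_number_def by (rule someI)
  then show ?thesis using card_sphere_nbrs_eq assms by metis
qed

lemma exists_farther_nbr:
  assumes x: "x \<in> V" and u: "u \<in> V" and less: "gdist E x u < diameter V E"
  shows "\<exists>u'. E u u' \<and> gdist E x u' = Suc (gdist E x u)"
proof -
  obtain a b where ab: "a \<in> V" "b \<in> V" "gdist E a b = diameter V E"
    using diameter_attained by blast
  obtain g' where g': "g' \<in> V" "gdist E a g' = Suc (gdist E x u)"
    using exists_gdist_between[OF ab(1,2), of "Suc (gdist E x u)"] ab less by auto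
  obtain g where g: "g \<in> V" "gdist E a g = gdist E x u" "gdist E g g' = 1"
    using exists_gdist_between[OF ab(1) g'(1), of "gdist E x u"] g' by auto
  have "g' \<in> sphere V E (gdist E a g + 1) a \<inter> {z. E g z}"
    using g g' gdist_eq_1_imp_edge by (auto simp: sphere_def)
  then have "card (sphere V E (gdist E a g + 1) a \<inter> {z. E g z}) \<noteq> 0"
    using finite_nbrs by auto
  then have "card (sphere V E (gdist E x u + 1) x \<inter> {z. E u z}) \<noteq> 0"
    using card_sphere_nbrs_pred_succ_eq(2)[OF ab(1) g(1) x u] g by simp
  then obtain u' where "u' \<in> sphere V E (gdist E x u + 1) x \<inter> {z. E u z}"
    by (metis card.empty ex_in_conv)
  then show ?thesis by (auto simp: sphere_def)
qed

lemma exists_antipode_beyond: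
  assumes u: "u \<in> V" and x: "x \<in> V"
  shows "\<exists>c\<in>V. gdist E u c = diameter V E \<and> gdist E x c + gdist E u x = diameter V E"
proof -
  have "\<exists>c\<in>V. gdist E u c = diameter V E \<and> gdist E x c + gdist E u x = diameter V E"
    if "x \<in> V" "gdist E u x + k = diameter V E" for k x
    using that
  proof (induction k arbitrary: x)
    case 0
    then show ?case by auto
  next
    case (Suc k)
    obtain x' where x': "E x x'" "gdist E u x' = Suc (gdist E u x)"
      using exists_farther_nbr[OF u Suc.prems(1)] Suc.prems(2) by auto
    have "x' \<in> V" using x' edge_in_V by blast
    then obtain c where c: "c \<in> V" "gdist E u c = diameter V E"
        "gdist E x' c + gdist E u x' = diameter V E"
      using Suc.IH[OF \<open>x' \<in> V\<close>] x'(2) Suc.prems(2) by auto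
    have "gdist E x c \<le> gdist E x' c + 1"
      using gdist_edge_le[OF c(1) edge_sym[OF x'(1)]] gdist_commute c(1) Suc.prems(1) \<open>x' \<in> V\<close>
      by simp
    moreover have "gdist E u c \<le> gdist E u x + gdist E x c"
      using gdist_triangle u Suc.prems(1) c(1) by blast
    ultimately show ?case using c x' by (intro bexI[of _ c]) auto
  qed
  then show ?thesis using gdist_le_diameter[OF u x] x le_add_diff_inverse by blast
qed

end

locale antipodal_distance_regular_graph = distance_regular_graph +
  fixes \<theta> :: "'a \<Rightarrow> 'b"
  assumes antipodal: "x \<in> V \<Longrightarrow> y \<in> V \<Longrightarrow> (x = y \<or> gdist E x y = diameter V E) \<longleftrightarrow> \<theta> x = \<theta> y"
begin

text \<open>The geodesic from \<open>y\<close> through \<open>x\<close> extends to an antipode of \<open>y\<close>, which lies in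
  the class of \<open>c\<close>; so \<open>d(x, y) \<le> D - d(x, c)\<close>, and the triangle inequality gives the converse.\<close>

lemma antipodal_class_gdist:
  assumes x: "x \<in> V" and c: "c \<in> V" and y: "y \<in> V" "\<theta> y = \<theta> c" "y \<noteq> c"
    and nearest: "\<And>c'. c' \<in> V \<Longrightarrow> \<theta> c' = \<theta> c \<Longrightarrow> gdist E x c \<le> gdist E x c'"
  shows "gdist E x y + gdist E x c = diameter V E"
proof -
  have "gdist E y c = diameter V E" using antipodal[OF y(1) c] y by simp
  moreover have "gdist E y c \<le> gdist E y x + gdist E x c" using gdist_triangle y(1) x c by blast
  ultimately have ge: "diameter V E \<le> gdist E x y + gdist E x c"
    using gdist_commute[OF x y(1)] by simp
  obtain c' where c': "c' \<in> V" "gdist E y c' = diameter V E"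
      "gdist E x c' + gdist E y x = diameter V E"
    using exists_antipode_beyond[OF y(1) x] by blast
  have "\<theta> c' = \<theta> c" using antipodal[OF y(1) c'(1)] c'(2) y(2) by simp
  then have "gdist E x c \<le> gdist E x c'" using nearest c'(1) by blast
  then show ?thesis using ge c'(3) gdist_commute[OF x y(1)] by simp
qed

lemma antipodal_class_profile:
  assumes x: "x \<in> V" and z: "z \<in> V" "z' \<in> V" "\<theta> z' = \<theta> z" "z' \<noteq> z"
  obtains c where "c \<in> V" "\<theta> c = \<theta> z" "2 * gdist E x c \<le> diameter V E"
    "\<And>y. y \<in> V \<Longrightarrow> \<theta> y = \<theta> z \<Longrightarrow>
      gdist E x y = (if y = c then gdist E x c else diameter V E - gdist E x c)"
proof -
  obtain c where c: "c \<in> V" "\<theta> c = \<theta> z"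
    and nearest: "\<And>c'. c' \<in> V \<and> \<theta> c' = \<theta> z \<Longrightarrow> gdist E x c \<le> gdist E x c'"
    using ex_has_least_nat[of "\<lambda>c. c \<in> V \<and> \<theta> c = \<theta> z" z "gdist E x"] z(1) by blast
  have far: "gdist E x y = diameter V E - gdist E x c" if "y \<in> V" "\<theta> y = \<theta> z" "y \<noteq> c" for y
    using antipodal_class_gdist[OF x c(1) that(1) _ that(3)] that(2) c(2) nearest by fastforce
  obtain y where "y \<in> V" "\<theta> y = \<theta> z" "y \<noteq> c" using z by metis
  then have half: "2 * gdist E x c \<le> diameter V E" using far nearest by fastforce
  have "gdist E x y = (if y = c then gdist E x c else diameter V E - gdist E x c)"
    if "y \<in> V" "\<theta> y = \<theta> z" for y
    using far[OF that] by (cases "y = c") simp_all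
  from that[OF c half this] show ?thesis .
qed

end

section \<open>Covers\<close>

lemma fibre_Un_fibre: "fibre W \<phi> v \<union> fibre W \<phi> w = {x \<in> W. \<phi> x \<in> {v, w}}"
  and fibre_Un_fibre_Un_fibre:
    "fibre W \<phi> u \<union> fibre W \<phi> v \<union> fibre W \<phi> w = {x \<in> W. \<phi> x \<in> {u, v, w}}"
  by (auto simp: fibre_def)

context
  fixes V :: "'a set" and E :: "'a \<Rightarrow> 'a \<Rightarrow> bool"
    and W :: "'b set" and F :: "'b \<Rightarrow> 'b \<Rightarrow> bool" and \<phi> :: "'b \<Rightarrow> 'a"
  assumes cover: "is_cover V E W F \<phi>"
begin

lemma cover_graphs: "graph V E" "graph W F"
  using cover by (simp_all add: is_cover_def)

lemma cover_edge: "F x y \<Longrightarrow> E (\<phi> x) (\<phi> y)"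
proof (rule ccontr)
  assume xy: "F x y" and "\<not> E (\<phi> x) (\<phi> y)"
  have in_W: "x \<in> W" "y \<in> W" using xy cover_graphs(2) by (auto simp: graph_def)
  then have "\<phi> x \<in> V" "\<phi> y \<in> V" using cover by (auto simp: is_cover_def)
  then have "coclique F (fibre W \<phi> (\<phi> x) \<union> fibre W \<phi> (\<phi> y))"
    using cover \<open>\<not> E (\<phi> x) (\<phi> y)\<close> by (cases "\<phi> x = \<phi> y") (auto simp: is_cover_def)
  then show False using xy in_W by (auto simp: coclique_def fibre_def)
qed

lemma cover_nbrs_in_fibres:
  assumes "E v w" "x \<in> W" "\<phi> x = v"
  shows "{y \<in> W. \<phi> y \<in> {v, w} \<and> F x y} = {y \<in> W. \<phi> y = w \<and> F x y}"
    and "card {y \<in> W. \<phi> y = w \<and> F x y} = 1"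
proof -
  show eq: "{y \<in> W. \<phi> y \<in> {v, w} \<and> F x y} = {y \<in> W. \<phi> y = w \<and> F x y}"
    using cover_edge[of x] assms cover_graphs(1) unfolding graph_def by fastforce
  have "perfect_matching_on F {y \<in> W. \<phi> y \<in> {v, w}}"
    using cover assms(1) unfolding is_cover_def fibre_Un_fibre by blast
  moreover have "x \<in> {y \<in> W. \<phi> y \<in> {v, w}}" using assms(2,3) by simp
  ultimately have "card {y \<in> {y \<in> W. \<phi> y \<in> {v, w}}. F x y} = 1"
    unfolding perfect_matching_on_def by blast
  moreover have "{y \<in> {y \<in> W. \<phi> y \<in> {v, w}}. F x y} = {y \<in> W. \<phi> y = w \<and> F x y}"
    using eq by blast
  ultimately show "card {y \<in> W. \<phi> y = w \<and> F x y} = 1" by simp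
qed

lemma cover_lift_edge:
  assumes "E (\<phi> x) w" "x \<in> W"
  shows "\<exists>y. \<phi> y = w \<and> F x y"
proof -
  obtain y where "{y \<in> W. \<phi> y = w \<and> F x y} = {y}"
    using cover_nbrs_in_fibres(2)[OF assms refl] by (auto simp: card_1_singleton_iff)
  then show ?thesis by blast
qed

lemma cover_unique_nbr_in_fibre:
  assumes "F z b" "F z b'" "\<phi> b = \<phi> b'"
  shows "b = b'"
proof -
  have "z \<in> W" "b \<in> W" "b' \<in> W" using assms cover_graphs(2) by (auto simp: graph_def)
  then have one: "card {y \<in> W. \<phi> y = \<phi> b \<and> F z y} = 1"
    using cover_nbrs_in_fibres(2)[OF cover_edge[OF assms(1)] \<open>z \<in> W\<close> refl] by blast
  have b: "b \<in> {y \<in> W. \<phi> y = \<phi> b \<and> F z y}" and b': "b' \<in> {y \<in> W. \<phi> y = \<phi> b \<and> F z y}"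
    using assms \<open>b \<in> W\<close> \<open>b' \<in> W\<close> by auto
  show ?thesis using b' unfolding card_1_mem_eq[OF one b] by simp
qed

lemma cover_lift_walk:
  "walk_len E k (\<phi> x) v \<Longrightarrow> x \<in> W \<Longrightarrow> \<exists>y. \<phi> y = v \<and> walk_len F k x y"
proof (induction k arbitrary: x)
  case (Suc k)
  obtain w where w: "E (\<phi> x) w" "walk_len E k w v" using Suc.prems by (auto simp: walk_len_Suc_iff)
  obtain x' where x': "\<phi> x' = w" "F x x'" using cover_lift_edge[OF w(1) Suc.prems(2)] by blast
  have "x' \<in> W" using x'(2) cover_graphs(2) by (simp add: graph_def)
  then obtain y where "\<phi> y = v" "walk_len F k x' y" using Suc.IH w(2) x'(1) by blast
  then show ?case using x'(2) by (auto simp: walk_len_Suc_iff)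
qed simp

lemma cover_gdist_le:
  assumes "gconnected W F" "a \<in> W" "b \<in> W"
  shows "gdist E (\<phi> a) (\<phi> b) \<le> gdist F a b"
proof -
  interpret connected_graph W F using cover_graphs(2) assms(1) by unfold_locales
  show ?thesis using gdist_hom_le[where F = E, OF cover_edge assms(2,3)] .
qed

lemma cover_exists_fibre_elem_at_gdist:
  assumes "gconnected V E" "gconnected W F" "a \<in> W" "v \<in> V"
  shows "\<exists>b\<in>fibre W \<phi> v. gdist F a b = gdist E (\<phi> a) v"
proof -
  interpret connected_graph V E using cover_graphs(1) assms(1) by unfold_locales
  have "\<phi> a \<in> V" using cover assms(3) by (auto simp: is_cover_def)
  then obtain b where b: "\<phi> b = v" "walk_len F (gdist E (\<phi> a) v) a b"
    using cover_lift_walk[OF walk_len_gdist assms(3)] assms(4) by blast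
  have "b \<in> W"
    using connected_graph.walk_len_in_V[OF _ b(2) assms(3)] cover_graphs(2) assms(2)
    by (simp add: connected_graph_def)
  then have "gdist E (\<phi> a) v \<le> gdist F a b" using cover_gdist_le[OF assms(2,3)] b(1) by blast
  moreover have "gdist F a b \<le> gdist E (\<phi> a) v" using gdist_le_walk_len[OF b(2)] .
  ultimately show ?thesis using \<open>b \<in> W\<close> b(1) by (intro bexI[of _ b]) (auto simp: fibre_def)
qed

text \<open>Each vertex over a neighbour of \<open>v\<close> has exactly one neighbour over \<open>v\<close>, so both
  sides count the edges between the fibre over \<open>v\<close> and the fibres over its neighbours.\<close>

lemma cover_sum_adjacent_fibres:
  assumes v: "v \<in> V"
  shows "(\<Sum>w\<in>{w. E v w}. card {z \<in> fibre W \<phi> w. P z})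
       = (\<Sum>b\<in>fibre W \<phi> v. card {z. F b z \<and> P z})"
proof -
  have finW: "finite W" and Fsym: "\<And>x y. F x y \<Longrightarrow> F y x" and FW: "\<And>x y. F x y \<Longrightarrow> x \<in> W \<and> y \<in> W"
    using cover_graphs(2) by (auto simp: graph_def)
  have finV: "finite V" and EV: "\<And>x y. E x y \<Longrightarrow> x \<in> V \<and> y \<in> V" and Esym: "\<And>x y. E x y \<Longrightarrow> E y x"
    using cover_graphs(1) by (auto simp: graph_def)
  let ?U = "{z \<in> W. (\<exists>b \<in> fibre W \<phi> v. F b z) \<and> P z}"
  have nbr_fibres: "(\<Union>w\<in>{w. E v w}. {z \<in> fibre W \<phi> w. P z}) = ?U"
  proof (intro equalityI subsetI)
    fix z assume "z \<in> (\<Union>w\<in>{w. E v w}. {z \<in> fibre W \<phi> w. P z})"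
    then obtain w where "E v w" "z \<in> W" "\<phi> z = w" "P z" by (auto simp: fibre_def)
    then obtain b where "\<phi> b = v" "F z b" using cover_lift_edge Esym by metis
    then show "z \<in> ?U" using \<open>z \<in> W\<close> \<open>P z\<close> Fsym FW unfolding fibre_def by blast
  next
    fix z assume "z \<in> ?U"
    then show "z \<in> (\<Union>w\<in>{w. E v w}. {z \<in> fibre W \<phi> w. P z})"
      using cover_edge by (force simp: fibre_def)
  qed
  have "finite {w. E v w}"
    by (rule finite_subset[OF _ finV]) (auto dest: EV)
  then have "card ?U = (\<Sum>w\<in>{w. E v w}. card {z \<in> fibre W \<phi> w. P z})"
    unfolding nbr_fibres[symmetric]
    by (intro card_UN_disjoint) (auto simp: fibre_def intro: finite_subset[OF _ finW])
  moreover have nbrs: "(\<Union>b\<in>fibre W \<phi> v. {z. F b z \<and> P z}) = ?U"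
    using FW by (auto simp: fibre_def)
  have "card ?U = (\<Sum>b\<in>fibre W \<phi> v. card {z. F b z \<and> P z})"
    unfolding nbrs[symmetric]
  proof (intro card_UN_disjoint ballI impI)
    show "finite (fibre W \<phi> v)" using finW by (simp add: fibre_def)
    show "finite {z. F b z \<and> P z}" for b
      by (rule finite_subset[OF _ finW]) (auto dest: FW)
    show "{z. F b z \<and> P z} \<inter> {z. F b' z \<and> P z} = {}"
      if "b \<in> fibre W \<phi> v" "b' \<in> fibre W \<phi> v" "b \<noteq> b'" for b b'
      using that cover_unique_nbr_in_fibre[OF Fsym Fsym] by (auto simp: fibre_def)
  qed
  ultimately show ?thesis by simp
qed

end

text \<open>The covering conditions only need to be checked from one vertex of each matching and
  triangle, since the fibres of a triangle can be listed in any order.\<close>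

lemma is_coverI:
  assumes gV: "graph V E" and gW: "graph W F" and image: "\<phi> ` W = V"
    and hom: "\<And>x y. F x y \<Longrightarrow> E (\<phi> x) (\<phi> y)"
    and matching: "\<And>x w. x \<in> W \<Longrightarrow> E (\<phi> x) w \<Longrightarrow> card {y \<in> {y \<in> W. \<phi> y \<in> {\<phi> x, w}}. F x y} = 1"
    and triangle: "\<And>x v w. x \<in> W \<Longrightarrow> E (\<phi> x) v \<Longrightarrow> E v w \<Longrightarrow> E (\<phi> x) w \<Longrightarrow>
      card {y \<in> {y \<in> W. \<phi> y \<in> {\<phi> x, v, w}}. F x y} = 2 \<and>
      (\<forall>y\<in>{y \<in> W. \<phi> y \<in> {\<phi> x, v, w}}. \<forall>z\<in>{y \<in> W. \<phi> y \<in> {\<phi> x, v, w}}.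
        F x y \<and> F x z \<and> y \<noteq> z \<longrightarrow> F y z)"
  shows "is_cover V E W F \<phi>"
  unfolding is_cover_def
proof (intro conjI ballI allI impI gV gW image)
  have E_sym: "\<And>v w. E v w \<Longrightarrow> E w v" and E_irrefl: "\<And>v. \<not> E v v"
    using gV by (auto simp: graph_def)
  show "coclique F (fibre W \<phi> v)" for v
    using E_irrefl by (auto simp: coclique_def fibre_def dest!: hom)
  show "coclique F (fibre W \<phi> v \<union> fibre W \<phi> w)" if "v \<noteq> w \<and> \<not> E v w" for v w
    unfolding coclique_def fibre_Un_fibre
  proof (intro ballI notI)
    fix x y assume "x \<in> {x \<in> W. \<phi> x \<in> {v, w}}" "y \<in> {x \<in> W. \<phi> x \<in> {v, w}}" "F x y"
    then show False using hom[OF \<open>F x y\<close>] that E_irrefl E_sym by auto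
  qed
  show "perfect_matching_on F (fibre W \<phi> v \<union> fibre W \<phi> w)" if vw: "E v w" for v w
    unfolding perfect_matching_on_def fibre_Un_fibre
  proof
    fix x assume "x \<in> {x \<in> W. \<phi> x \<in> {v, w}}"
    then consider "x \<in> W" "\<phi> x = v" | "x \<in> W" "\<phi> x = w" by auto
    then show "card {y \<in> {x \<in> W. \<phi> x \<in> {v, w}}. F x y} = 1"
    proof cases
      case 1
      then have "E (\<phi> x) w" using vw by simp
      from matching[OF 1(1) this] show ?thesis unfolding 1(2) .
    next
      case 2
      then have "E (\<phi> x) v" using E_sym[OF vw] by simp
      have perm: "{w, v} = {v, w}" by auto
      from matching[OF 2(1) \<open>E (\<phi> x) v\<close>] show ?thesis unfolding 2(2) perm .
    qed
  qed
  show "triangles_on F (fibre W \<phi> u \<union> fibre W \<phi> v \<union> fibre W \<phi> w)"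
    if uvw: "E u v \<and> E v w \<and> E u w" for u v w
    unfolding triangles_on_def fibre_Un_fibre_Un_fibre
  proof
    fix x assume "x \<in> {x \<in> W. \<phi> x \<in> {u, v, w}}"
    then consider "x \<in> W" "\<phi> x = u" | "x \<in> W" "\<phi> x = v" | "x \<in> W" "\<phi> x = w" by auto
    then show "card {y \<in> {x \<in> W. \<phi> x \<in> {u, v, w}}. F x y} = 2 \<and>
        (\<forall>y\<in>{x \<in> W. \<phi> x \<in> {u, v, w}}. \<forall>z\<in>{x \<in> W. \<phi> x \<in> {u, v, w}}.
          F x y \<and> F x z \<and> y \<noteq> z \<longrightarrow> F y z)"
    proof cases
      case 1
      then have "E (\<phi> x) v" "E v w" "E (\<phi> x) w" using uvw by simp_all
      from triangle[OF 1(1) this] show ?thesis unfolding 1(2) .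
    next
      case 2
      then have "E (\<phi> x) u" "E u w" "E (\<phi> x) w" using uvw E_sym by simp_all
      have perm: "{v, u, w} = {u, v, w}" by auto
      from triangle[OF 2(1) \<open>E (\<phi> x) u\<close> \<open>E u w\<close> \<open>E (\<phi> x) w\<close>] show ?thesis
        unfolding 2(2) perm .
    next
      case 3
      then have "E (\<phi> x) u" "E u v" "E (\<phi> x) v" using uvw E_sym by simp_all
      have perm: "{w, u, v} = {u, v, w}" by auto
      from triangle[OF 3(1) \<open>E (\<phi> x) u\<close> \<open>E u v\<close> \<open>E (\<phi> x) v\<close>] show ?thesis
        unfolding 3(2) perm .
    qed
  qed
qed

context
  fixes V :: "'a set" and E :: "'a \<Rightarrow> 'a \<Rightarrow> bool"
    and W :: "'c set" and F :: "'c \<Rightarrow> 'c \<Rightarrow> bool" and \<phi> :: "'c \<Rightarrow> 'a"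
    and V' :: "'b set" and E' :: "'b \<Rightarrow> 'b \<Rightarrow> bool" and \<theta> :: "'b \<Rightarrow> 'a"
    and \<psi> :: "'c \<Rightarrow> 'b"
  assumes cov: "is_cover V E W F \<phi>" and cov': "is_cover V E V' E' \<theta>"
    and image: "\<psi> ` W = V'" and comm: "\<And>x. x \<in> W \<Longrightarrow> \<theta> (\<psi> x) = \<phi> x"
    and hom: "\<And>x y. F x y \<Longrightarrow> E' (\<psi> x) (\<psi> y)"
begin

lemma factor_nbrs_eq:
  assumes "\<And>A'. A' \<in> V' \<Longrightarrow> \<theta> A' \<in> \<theta> ` S \<Longrightarrow> E' (\<psi> x) A' \<Longrightarrow> A' \<in> S"
  shows "{y \<in> {y \<in> W. \<psi> y \<in> S}. F x y} = {y \<in> {y \<in> W. \<phi> y \<in> \<theta> ` S}. F x y}"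
  using assms image comm hom by (auto simp flip: comm)

lemma factor_matching:
  assumes x: "x \<in> W" and AB: "E' (\<psi> x) B"
  shows "card {y \<in> {y \<in> W. \<psi> y \<in> {\<psi> x, B}}. F x y} = 1"
proof -
  have \<theta>AB: "E (\<theta> (\<psi> x)) (\<theta> B)" using cover_edge[OF cov' AB] .
  have \<phi>x: "\<phi> x = \<theta> (\<psi> x)" using comm[OF x] by simp
  have A: "\<psi> x \<in> V'" using x image by blast
  have "card {A' \<in> V'. \<theta> A' = \<theta> B \<and> E' (\<psi> x) A'} = 1"
    using cover_nbrs_in_fibres(2)[OF cov' \<theta>AB A refl] .
  moreover have "B \<in> {A' \<in> V'. \<theta> A' = \<theta> B \<and> E' (\<psi> x) A'}"
    using AB cover_graphs(2)[OF cov'] by (auto simp: graph_def)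
  ultimately have "{A' \<in> V'. \<theta> A' = \<theta> B \<and> E' (\<psi> x) A'} = {B}"
    by (rule card_1_mem_eq)
  then have "A' \<in> {\<psi> x, B}" if "A' \<in> V'" "\<theta> A' \<in> \<theta> ` {\<psi> x, B}" "E' (\<psi> x) A'" for A'
    using that cover_nbrs_in_fibres(1)[OF cov' \<theta>AB A refl] by blast
  then have "{y \<in> {y \<in> W. \<psi> y \<in> {\<psi> x, B}}. F x y} = {y \<in> {y \<in> W. \<phi> y \<in> \<theta> ` {\<psi> x, B}}. F x y}"
    by (rule factor_nbrs_eq)
  also have "\<dots> = {y \<in> W. \<phi> y = \<theta> B \<and> F x y}"
    using cover_nbrs_in_fibres(1)[OF cov \<theta>AB x \<phi>x] by auto
  finally show ?thesis using cover_nbrs_in_fibres(2)[OF cov \<theta>AB x \<phi>x] by simp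
qed

lemma factor_triangle:
  assumes x: "x \<in> W" and ABC: "E' (\<psi> x) B" "E' B C" "E' (\<psi> x) C"
  defines "S \<equiv> {y \<in> W. \<psi> y \<in> {\<psi> x, B, C}}"
  shows "card {y \<in> S. F x y} = 2 \<and> (\<forall>y\<in>S. \<forall>z\<in>S. F x y \<and> F x z \<and> y \<noteq> z \<longrightarrow> F y z)"
proof -
  define A where "A = \<psi> x"
  have \<theta>ABC: "E (\<theta> A) (\<theta> B) \<and> E (\<theta> B) (\<theta> C) \<and> E (\<theta> A) (\<theta> C)"
    using cover_edge[OF cov'] ABC by (auto simp: A_def)
  define T' where "T' = {A' \<in> V'. \<theta> A' \<in> {\<theta> A, \<theta> B, \<theta> C}}"
  define T where "T = {y \<in> W. \<phi> y \<in> {\<theta> A, \<theta> B, \<theta> C}}"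
  have "triangles_on E' T'"
    using cov' \<theta>ABC unfolding is_cover_def fibre_Un_fibre_Un_fibre T'_def by blast
  moreover have "A \<in> T'" using x image by (auto simp: T'_def A_def)
  ultimately have "card {y \<in> T'. E' A y} = 2" unfolding triangles_on_def by blast
  moreover have "B \<in> {y \<in> T'. E' A y}" "C \<in> {y \<in> T'. E' A y}" "B \<noteq> C"
    using ABC cover_graphs(2)[OF cov'] by (auto simp: T'_def A_def graph_def)
  ultimately have nbrs_A: "{y \<in> T'. E' A y} = {B, C}" by (rule card_2_mem_eq)
  have "{y \<in> S. F x y} = {y \<in> {y \<in> W. \<phi> y \<in> \<theta> ` {A, B, C}}. F x y}"
    unfolding S_def A_def[symmetric]
  proof (rule factor_nbrs_eq)
    fix A' assume "A' \<in> V'" "\<theta> A' \<in> \<theta> ` {A, B, C}" "E' (\<psi> x) A'"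
    then have "A' \<in> {y \<in> T'. E' A y}" by (auto simp: T'_def A_def)
    then show "A' \<in> {A, B, C}" using nbrs_A by blast
  qed
  also have "\<dots> = {y \<in> T. F x y}" by (auto simp: T_def)
  finally have nbrs_x: "{y \<in> S. F x y} = {y \<in> T. F x y}" .
  have "triangles_on F T"
    using cov \<theta>ABC unfolding is_cover_def fibre_Un_fibre_Un_fibre T_def by blast
  moreover have "x \<in> T" using comm[OF x] by (simp add: T_def A_def x)
  moreover have "y \<in> T" if "y \<in> S" for y
  proof -
    have "y \<in> W" "\<psi> y \<in> {A, B, C}" using that by (simp_all add: S_def A_def)
    then show ?thesis using comm[of y] by (auto simp: T_def)
  qed
  ultimately show ?thesis unfolding nbrs_x triangles_on_def by blast
qed

lemma is_cover_factor: "is_cover V' E' W F \<psi>"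
  using cover_graphs(2)[OF cov'] cover_graphs(2)[OF cov] image hom factor_matching factor_triangle
  by (rule is_coverI)

end

section \<open>Covers defined by permutation voltages\<close>

text \<open>A representation of the fundamental group is determined by the permutations
  \<open>\<sigma> v w = g\<^sub>v\<^sub>,\<^sub>w\<rho>\<close> of the generators; only the edge and triangle relations matter for the
  cover \<open>\<Gamma>\<^sub>\<rho>\<close>.\<close>

definition permutation_voltage :: "('a \<Rightarrow> 'a \<Rightarrow> bool) \<Rightarrow> nat \<Rightarrow> ('a \<Rightarrow> 'a \<Rightarrow> nat \<Rightarrow> nat) \<Rightarrow> bool"
  where "permutation_voltage E r \<sigma> \<longleftrightarrow>
    (\<forall>v w i. E v w \<longrightarrow> i < r \<longrightarrow> \<sigma> v w i < r \<and> \<sigma> w v (\<sigma> v w i) = i) \<and>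
    (\<forall>x y z i. E x y \<longrightarrow> E y z \<longrightarrow> E z x \<longrightarrow> i < r \<longrightarrow> \<sigma> z x (\<sigma> y z (\<sigma> x y i)) = i)"

lemma fg_rep_permutation_voltage: "fg_rep V E T r \<pi> \<Longrightarrow> permutation_voltage E r \<pi>"
  unfolding fg_rep_def permutation_voltage_def by (meson atLeastLessThan_iff bij_betwE zero_le)

context
  fixes E :: "'a \<Rightarrow> 'a \<Rightarrow> bool" and r :: nat and \<sigma> :: "'a \<Rightarrow> 'a \<Rightarrow> nat \<Rightarrow> nat"
  assumes voltage: "permutation_voltage E r \<sigma>"
begin

lemma voltage_less: "E v w \<Longrightarrow> i < r \<Longrightarrow> \<sigma> v w i < r"
  and voltage_inverse: "E v w \<Longrightarrow> i < r \<Longrightarrow> \<sigma> w v (\<sigma> v w i) = i"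
  and voltage_triangle: "E x y \<Longrightarrow> E y z \<Longrightarrow> E z x \<Longrightarrow> i < r \<Longrightarrow> \<sigma> z x (\<sigma> y z (\<sigma> x y i)) = i"
  using voltage unfolding permutation_voltage_def by blast+

lemma voltage_triangle_comm:
  assumes "E x y" "E y z" "E z x" "i < r"
  shows "\<sigma> y z (\<sigma> x y i) = \<sigma> x z i"
  using voltage_inverse[OF assms(3) voltage_less[OF assms(2) voltage_less[OF assms(1,4)]]]
    voltage_triangle[OF assms]
  by simp

lemma voltage_nbrs:
  assumes "graph V E" "a \<in> V" "i < r"
  shows "{y \<in> {y \<in> V \<times> {0..<r}. fst y \<in> S}. cover_graph V E r \<sigma> (a, i) y}
    = (\<lambda>b. (b, \<sigma> a b i)) ` {b \<in> S. E a b}"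
  using assms voltage_less by (auto simp: cover_graph_def graph_def)

lemma voltage_card_nbrs:
  assumes "graph V E" "a \<in> V" "i < r"
  shows "card {y \<in> {y \<in> V \<times> {0..<r}. fst y \<in> S}. cover_graph V E r \<sigma> (a, i) y} = card {b \<in> S. E a b}"
  unfolding voltage_nbrs[OF assms] by (rule card_image) (simp add: inj_on_def)

lemma voltage_nbrs_adjacent:
  assumes gV: "graph V E" and a: "a \<in> V" "i < r" and avw: "E a v" "E v w" "E a w"
    and y: "y \<in> {y \<in> V \<times> {0..<r}. fst y \<in> {a, v, w}}" "cover_graph V E r \<sigma> (a, i) y"
    and z: "z \<in> {y \<in> V \<times> {0..<r}. fst y \<in> {a, v, w}}" "cover_graph V E r \<sigma> (a, i) z"
    and "y \<noteq> z"
  shows "cover_graph V E r \<sigma> y z"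
proof -
  have E_sym: "\<And>x y. E x y \<Longrightarrow> E y x" and E_irrefl: "\<And>x. \<not> E x x"
    and E_V: "\<And>x y. E x y \<Longrightarrow> x \<in> V \<and> y \<in> V"
    using gV by (auto simp: graph_def)
  have "{b \<in> {a, v, w}. E a b} = {v, w}" using avw E_irrefl by auto
  then have "{y \<in> {y \<in> V \<times> {0..<r}. fst y \<in> {a, v, w}}. cover_graph V E r \<sigma> (a, i) y}
      = (\<lambda>b. (b, \<sigma> a b i)) ` {v, w}"
    using voltage_nbrs[OF gV a, of "{a, v, w}"] by simp
  then have "y \<in> (\<lambda>b. (b, \<sigma> a b i)) ` {v, w}" "z \<in> (\<lambda>b. (b, \<sigma> a b i)) ` {v, w}"
    using y z by blast+
  then obtain b c where bc: "y = (b, \<sigma> a b i)" "z = (c, \<sigma> a c i)" "b \<in> {v, w}" "c \<in> {v, w}"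
    by blast
  then have "E a b" "E a c" "E b c" using \<open>y \<noteq> z\<close> avw E_sym by auto
  then show ?thesis
    using bc voltage_triangle_comm[OF \<open>E a b\<close> \<open>E b c\<close> E_sym[OF \<open>E a c\<close>] a(2)]
      voltage_less[OF \<open>E a b\<close> a(2)] voltage_less[OF \<open>E a c\<close> a(2)] E_V
    by (auto simp: cover_graph_def)
qed

lemma voltage_r_cover:
  assumes gV: "graph V E" and r: "0 < r"
  shows "r_cover V E (V \<times> {0..<r}) (cover_graph V E r \<sigma>) fst r"
proof -
  let ?W = "V \<times> {0..<r}" and ?F = "cover_graph V E r \<sigma>"
  have E_sym: "\<And>x y. E x y \<Longrightarrow> E y x" and E_irrefl: "\<And>x. \<not> E x x"
    using gV by (auto simp: graph_def)
  have "is_cover V E ?W ?F fst"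
  proof (rule is_coverI)
    show "graph ?W ?F"
      using gV unfolding graph_def
      by (auto simp: cover_graph_def E_sym voltage_inverse voltage_less E_irrefl)
    show "fst ` ?W = V" using r by force
    show "E (fst x) (fst y)" if "?F x y" for x y
      using that by (auto simp: cover_graph_def)
  next
    fix x w assume "x \<in> ?W" and aw: "E (fst x) w"
    then obtain a i where x: "x = (a, i)" "a \<in> V" "i < r" by auto
    have "{b \<in> {a, w}. E a b} = {w}" using aw E_irrefl x(1) by auto
    then show "card {y \<in> {y \<in> ?W. fst y \<in> {fst x, w}}. ?F x y} = 1"
      unfolding x(1) fst_conv voltage_card_nbrs[OF gV x(2,3)] by simp
  next
    fix x v w assume "x \<in> ?W" and avw: "E (fst x) v" "E v w" "E (fst x) w"
    then obtain a i where x: "x = (a, i)" "a \<in> V" "i < r" by auto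
    have "{b \<in> {a, v, w}. E a b} = {v, w}" using avw E_irrefl x(1) by auto
    then have "card {y \<in> {y \<in> ?W. fst y \<in> {fst x, v, w}}. ?F x y} = 2"
      unfolding x(1) fst_conv voltage_card_nbrs[OF gV x(2,3)]
      using E_irrefl[of v] avw(2) by (cases "v = w") auto
    moreover have "?F y z" if "y \<in> {y \<in> ?W. fst y \<in> {fst x, v, w}}"
      "z \<in> {y \<in> ?W. fst y \<in> {fst x, v, w}}" "?F x y \<and> ?F x z \<and> y \<noteq> z" for y z
      using voltage_nbrs_adjacent[OF gV x(2,3), of v w y z] that avw x(1) by simp
    ultimately show "card {y \<in> {y \<in> ?W. fst y \<in> {fst x, v, w}}. ?F x y} = 2 \<and>
      (\<forall>y\<in>{y \<in> ?W. fst y \<in> {fst x, v, w}}. \<forall>z\<in>{y \<in> ?W. fst y \<in> {fst x, v, w}}.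
        ?F x y \<and> ?F x z \<and> y \<noteq> z \<longrightarrow> ?F y z)"
      by blast
  qed (rule gV)
  moreover have "card (fibre ?W fst v) = r" if "v \<in> V" for v
  proof -
    have "fibre ?W fst v = {v} \<times> {0..<r}" using that by (auto simp: fibre_def)
    then show ?thesis by simp
  qed
  ultimately show ?thesis by (simp add: r_cover_def)
qed

end

section \<open>The quotient of an antipodal cover by a block system\<close>

text \<open>\<open>\<Gamma>\<^sub>\<rho>\<close> is the cover of the voltage \<open>\<pi>\<close>, \<open>blk i\<close> is the block containing \<open>i\<close>, and \<open>\<tau>\<close>
  is the induced action \<open>\<sigma>\<close> on the blocks.\<close>

locale block_quotient =
  fixes V :: "'a set" and E :: "'a \<Rightarrow> 'a \<Rightarrow> bool" and m n :: nat
    and \<pi> :: "'a \<Rightarrow> 'a \<Rightarrow> nat \<Rightarrow> nat" and blk :: "nat \<Rightarrow> nat" and \<tau> :: "'a \<Rightarrow> 'a \<Rightarrow> nat \<Rightarrow> nat"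
  assumes m_gt_1: "1 < m"
    and voltage: "permutation_voltage E (m * n) \<pi>"
    and blk_image: "blk ` {0..<m * n} = {0..<m}"
    and card_blk_preimage: "\<And>k. k < m \<Longrightarrow> card {i. i < m * n \<and> blk i = k} = n"
    and block_voltage: "\<And>v w i. E v w \<Longrightarrow> i < m * n \<Longrightarrow> \<tau> v w (blk i) = blk (\<pi> v w i)"
    and cover_drg: "distance_regular (V \<times> {0..<m * n}) (cover_graph V E (m * n) \<pi>)"
    and cover_antipodal:
      "antipodal_cover V E (V \<times> {0..<m * n}) (cover_graph V E (m * n) \<pi>) fst (m * n)"
begin

abbreviation "V\<^sub>\<rho> \<equiv> V \<times> {0..<m * n}"
abbreviation "E\<^sub>\<rho> \<equiv> cover_graph V E (m * n) \<pi>"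
abbreviation "V\<^sub>\<sigma> \<equiv> V \<times> {0..<m}"
abbreviation "E\<^sub>\<sigma> \<equiv> cover_graph V E m \<tau>"
abbreviation "D \<equiv> diameter V\<^sub>\<rho> E\<^sub>\<rho>"

definition proj :: "'a \<times> nat \<Rightarrow> 'a \<times> nat" where
  "proj = (\<lambda>(v, i). (v, blk i))"

lemma proj_Pair [simp]: "proj (v, i) = (v, blk i)"
  by (simp add: proj_def)

sublocale cover: antipodal_distance_regular_graph V\<^sub>\<rho> E\<^sub>\<rho> fst
proof
  show "distance_regular V\<^sub>\<rho> E\<^sub>\<rho>" by (rule cover_drg)
  show "x \<in> V\<^sub>\<rho> \<Longrightarrow> y \<in> V\<^sub>\<rho> \<Longrightarrow> (x = y \<or> gdist E\<^sub>\<rho> x y = D) \<longleftrightarrow> fst x = fst y" for x y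
    using cover_antipodal unfolding antipodal_cover_def by blast
qed

lemma cover_is_cover: "is_cover V E V\<^sub>\<rho> E\<^sub>\<rho> fst"
  using cover_antipodal by (simp add: antipodal_cover_def r_cover_def)

lemma base_graph: "graph V E"
  using cover_is_cover by (rule cover_graphs)

lemma n_pos: "0 < n"
  using blk_image m_gt_1 by (cases n) auto

lemma blk_less: "i < m * n \<Longrightarrow> blk i < m"
  using blk_image by auto

lemma blk_surj: "k < m \<Longrightarrow> \<exists>i < m * n. blk i = k"
  using blk_image by (metis atLeastLessThan_iff imageE zero_le)

lemma block_permutation_voltage: "permutation_voltage E m \<tau>"
proof -
  have edge: "\<tau> v w k < m \<and> \<tau> w v (\<tau> v w k) = k" if vw: "E v w" and "k < m" for v w k
  proof -
    obtain i where i: "i < m * n" "blk i = k" using blk_surj \<open>k < m\<close> by blast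
    have "E w v" using vw base_graph by (simp add: graph_def)
    then show ?thesis
      using block_voltage[OF vw i(1)] block_voltage[OF \<open>E w v\<close> voltage_less[OF voltage vw i(1)]]
        voltage_inverse[OF voltage vw i(1)] voltage_less[OF voltage vw i(1)] blk_less i
      by simp
  qed
  have triangle: "\<tau> z x (\<tau> y z (\<tau> x y k)) = k"
    if xyz: "E x y" "E y z" "E z x" and "k < m" for x y z k
  proof -
    obtain i where i: "i < m * n" "blk i = k" using blk_surj \<open>k < m\<close> by blast
    have lt: "\<pi> x y i < m * n" "\<pi> y z (\<pi> x y i) < m * n"
      using voltage_less[OF voltage] xyz i(1) by blast+
    show ?thesis
      using block_voltage[OF xyz(1) i(1)] block_voltage[OF xyz(2) lt(1)]
        block_voltage[OF xyz(3) lt(2)] voltage_triangle[OF voltage xyz i(1)] i(2)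
      by simp
  qed
  show ?thesis unfolding permutation_voltage_def using edge triangle by blast
qed

lemma quotient_r_cover: "r_cover V E V\<^sub>\<sigma> E\<^sub>\<sigma> fst m"
  using voltage_r_cover[OF block_permutation_voltage base_graph] m_gt_1 by simp

lemma proj_edge: "E\<^sub>\<rho> a b \<Longrightarrow> E\<^sub>\<sigma> (proj a) (proj b)"
  by (cases a; cases b) (auto simp: cover_graph_def blk_less block_voltage)

lemma proj_image: "proj ` V\<^sub>\<rho> = V\<^sub>\<sigma>"
proof
  show "proj ` V\<^sub>\<rho> \<subseteq> V\<^sub>\<sigma>" using blk_less by auto
  show "V\<^sub>\<sigma> \<subseteq> proj ` V\<^sub>\<rho>"
  proof
    fix B assume "B \<in> V\<^sub>\<sigma>"
    then obtain v k where "B = (v, k)" "v \<in> V" "k < m" by auto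
    moreover obtain i where "i < m * n" "blk i = k" using blk_surj \<open>k < m\<close> by blast
    ultimately show "B \<in> proj ` V\<^sub>\<rho>" by (intro image_eqI[of _ _ "(v, i)"]) auto
  qed
qed

lemma proj_is_cover: "is_cover V\<^sub>\<sigma> E\<^sub>\<sigma> V\<^sub>\<rho> E\<^sub>\<rho> proj"
proof (rule is_cover_factor[OF cover_is_cover])
  show "is_cover V E V\<^sub>\<sigma> E\<^sub>\<sigma> fst" using quotient_r_cover by (simp add: r_cover_def)
  show "fst (proj x) = fst x" for x by (cases x) simp
qed (use proj_image proj_edge in auto)

sublocale quotient: connected_graph V\<^sub>\<sigma> E\<^sub>\<sigma>
  using quotient_r_cover cover.gconnected_hom_image[where F = "E\<^sub>\<sigma>" and f = proj, OF proj_edge] proj_image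
  by unfold_locales (auto simp: r_cover_def is_cover_def)

lemma card_block: "B \<in> V\<^sub>\<sigma> \<Longrightarrow> card (fibre V\<^sub>\<rho> proj B) = n"
proof -
  assume "B \<in> V\<^sub>\<sigma>"
  then obtain w k where B: "B = (w, k)" "w \<in> V" "k < m" by auto
  have "fibre V\<^sub>\<rho> proj B = Pair w ` {i. i < m * n \<and> blk i = k}"
    using B by (auto simp: fibre_def)
  then show ?thesis using card_blk_preimage[OF B(3)] by (simp add: card_image inj_on_def)
qed

lemma block_gdist_bounds:
  assumes "a \<in> V\<^sub>\<rho>" "B \<in> V\<^sub>\<sigma>"
  shows "\<exists>b\<in>fibre V\<^sub>\<rho> proj B. gdist E\<^sub>\<rho> a b = gdist E\<^sub>\<sigma> (proj a) B"
    and "b \<in> fibre V\<^sub>\<rho> proj B \<Longrightarrow> gdist E\<^sub>\<sigma> (proj a) B \<le> gdist E\<^sub>\<rho> a b"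
  using cover_exists_fibre_elem_at_gdist[OF proj_is_cover quotient.connected cover.connected assms]
    cover_gdist_le[OF proj_is_cover cover.connected assms(1), of b]
  by (auto simp: fibre_def)

definition block_profile :: "nat \<Rightarrow> nat \<Rightarrow> nat" where
  "block_profile j s = (if 2 * j < D then (if s = j then 1 else if s = D - j then n - 1 else 0)
     else (if s = j then n else 0))"

lemma block_profile_triangular: "s < j \<Longrightarrow> block_profile j s = 0"
  and block_profile_diag_pos: "0 < block_profile j j"
  using n_pos by (auto simp: block_profile_def)

text \<open>\<open>j\<close> is the least of the distances, so it is \<open>h\<close> if \<open>c \<in> F\<close> and \<open>D - h \<ge> h\<close> otherwise.\<close>

lemma card_eq_block_profile:
  fixes \<delta> :: "'b \<Rightarrow> nat"
  assumes card_F: "card F = n" and half: "2 * h \<le> D"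
    and dist: "\<And>b. b \<in> F \<Longrightarrow> \<delta> b = (if b = c then h else D - h)"
    and b0: "b0 \<in> F" "\<delta> b0 = j" and j_le: "\<And>b. b \<in> F \<Longrightarrow> j \<le> \<delta> b"
  shows "card {b \<in> F. \<delta> b = s} = block_profile j s"
proof -
  have fin_F: "finite F" using card_F n_pos card_ge_0_finite by auto
  have set_eq: "{b \<in> F. \<delta> b = s} = {b \<in> F. (if b = c then h else D - h) = s}"
    using dist by auto
  show ?thesis
  proof (cases "c \<in> F")
    case True
    have "j = h" using j_le[OF True] dist[OF True] dist[OF b0(1)] b0(2) half
      by (auto split: if_splits)
    consider "s = h" "2 * h < D" | "s = D - h" "2 * h < D" | "s = h" "2 * h = D"
      | "s \<noteq> h" "s \<noteq> D - h"
      using half by linarith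
    then show ?thesis
    proof cases
      case 1
      then have "{b \<in> F. \<delta> b = s} = {c}" unfolding set_eq using True by auto
      then show ?thesis using 1 \<open>j = h\<close> by (simp add: block_profile_def)
    next
      case 2
      then have "{b \<in> F. \<delta> b = s} = F - {c}" unfolding set_eq by auto
      then show ?thesis using 2 \<open>j = h\<close> True card_F fin_F by (simp add: block_profile_def)
    next
      case 3
      then have "{b \<in> F. \<delta> b = s} = F" unfolding set_eq by auto
      then show ?thesis using 3 \<open>j = h\<close> card_F by (simp add: block_profile_def)
    next
      case 4
      then have "{b \<in> F. \<delta> b = s} = {}" unfolding set_eq by auto
      then show ?thesis unfolding \<open>j = h\<close> using 4 by (simp only: card.empty) (simp add: block_profile_def)
    qed
  next
    case False
    then have "j = D - h" using dist b0 by auto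
    then have not_less: "\<not> 2 * j < D" using half by linarith
    have "{b \<in> F. \<delta> b = s} = (if s = j then F else {})"
      unfolding set_eq using False \<open>j = D - h\<close> by auto
    then show ?thesis unfolding block_profile_def using not_less card_F by simp
  qed
qed

lemma card_block_gdist_eq:
  assumes a: "a \<in> V\<^sub>\<rho>" and B: "B \<in> V\<^sub>\<sigma>"
  shows "card {b \<in> fibre V\<^sub>\<rho> proj B. gdist E\<^sub>\<rho> a b = s} = block_profile (gdist E\<^sub>\<sigma> (proj a) B) s"
proof -
  obtain w where w: "w \<in> V" "fst B = w" using B by auto
  have "1 < m * n" using m_gt_1 n_pos by (cases n) auto
  then have z: "(w, 0) \<in> V\<^sub>\<rho>" "(w, 1) \<in> V\<^sub>\<rho>" "fst (w, 1) = fst (w, 0)" "(w, 1) \<noteq> (w, 0::nat)"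
    using w(1) m_gt_1 n_pos by simp_all
  obtain c where "c \<in> V\<^sub>\<rho>" "fst c = w" and half: "2 * gdist E\<^sub>\<rho> a c \<le> D"
    and profile: "\<And>y. y \<in> V\<^sub>\<rho> \<Longrightarrow> fst y = w \<Longrightarrow>
      gdist E\<^sub>\<rho> a y = (if y = c then gdist E\<^sub>\<rho> a c else D - gdist E\<^sub>\<rho> a c)"
    by (rule cover.antipodal_class_profile[OF a z, unfolded fst_conv]) (rule that)
  have dist: "gdist E\<^sub>\<rho> a b = (if b = c then gdist E\<^sub>\<rho> a c else D - gdist E\<^sub>\<rho> a c)"
    if "b \<in> fibre V\<^sub>\<rho> proj B" for b
    using profile[of b] that w(2) by (cases b) (auto simp: fibre_def)
  obtain b0 where b0: "b0 \<in> fibre V\<^sub>\<rho> proj B" "gdist E\<^sub>\<rho> a b0 = gdist E\<^sub>\<sigma> (proj a) B"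
    using block_gdist_bounds(1)[OF a B] by blast
  show ?thesis
    using card_eq_block_profile[OF card_block[OF B] half dist b0 block_gdist_bounds(2)[OF a B]] .
qed

lemma obtain_proj_preimage:
  assumes "X \<in> V\<^sub>\<sigma>" obtains a where "a \<in> V\<^sub>\<rho>" "proj a = X"
  using assms proj_image by (metis imageE)

text \<open>Double counting the edges between the block over \<open>Y\<close> and the blocks over its
  neighbours, sorted by their distance from a vertex over \<open>X\<close>.\<close>

lemma sum_nbrs_block_profile:
  assumes X: "X \<in> V\<^sub>\<sigma>" and Y: "Y \<in> V\<^sub>\<sigma>"
  shows "(\<Sum>Z\<in>{Z. E\<^sub>\<sigma> Y Z}. block_profile (gdist E\<^sub>\<sigma> X Z) s)
       = (\<Sum>u\<le>D. block_profile (gdist E\<^sub>\<sigma> X Y) u * cover.intersection_number u s)"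
proof -
  obtain a where a: "a \<in> V\<^sub>\<rho>" "proj a = X" using obtain_proj_preimage[OF X] .
  have fibre_Y: "b \<in> V\<^sub>\<rho>" if "b \<in> fibre V\<^sub>\<rho> proj Y" for b
    using that by (simp add: fibre_def)
  have "(\<Sum>Z\<in>{Z. E\<^sub>\<sigma> Y Z}. block_profile (gdist E\<^sub>\<sigma> X Z) s)
      = (\<Sum>Z\<in>{Z. E\<^sub>\<sigma> Y Z}. card {z \<in> fibre V\<^sub>\<rho> proj Z. gdist E\<^sub>\<rho> a z = s})"
    using card_block_gdist_eq[OF a(1)] quotient.edge_in_V a(2) by (intro sum.cong) auto
  also have "\<dots> = (\<Sum>b\<in>fibre V\<^sub>\<rho> proj Y. card {z. E\<^sub>\<rho> b z \<and> gdist E\<^sub>\<rho> a z = s})"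
    by (rule cover_sum_adjacent_fibres[OF proj_is_cover Y])
  also have "\<dots> = (\<Sum>b\<in>fibre V\<^sub>\<rho> proj Y. cover.intersection_number (gdist E\<^sub>\<rho> a b) s)"
    using cover.card_sphere_nbrs_intersection_number[OF a(1) fibre_Y]
    by (intro sum.cong) (auto simp: cover.sphere_inter_nbrs)
  also have "\<dots> = (\<Sum>u\<le>D. card {b \<in> fibre V\<^sub>\<rho> proj Y. gdist E\<^sub>\<rho> a b = u}
      * cover.intersection_number u s)"
    using cover.gdist_le_diameter[OF a(1) fibre_Y] card_block[OF Y]
    by (intro sum_comp_by_value) (auto intro: card_ge_0_finite simp: n_pos)
  also have "\<dots> = (\<Sum>u\<le>D. block_profile (gdist E\<^sub>\<sigma> X Y) u * cover.intersection_number u s)"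
    using card_block_gdist_eq[OF a(1) Y] a(2) by simp
  finally show ?thesis .
qed

lemma quotient_distance_regular: "distance_regular V\<^sub>\<sigma> E\<^sub>\<sigma>"
proof -
  have "card (sphere V\<^sub>\<sigma> E\<^sub>\<sigma> k X \<inter> {z. E\<^sub>\<sigma> Y z}) = card (sphere V\<^sub>\<sigma> E\<^sub>\<sigma> k X' \<inter> {z. E\<^sub>\<sigma> Y' z})"
    if "X \<in> V\<^sub>\<sigma>" "Y \<in> V\<^sub>\<sigma>" "X' \<in> V\<^sub>\<sigma>" "Y' \<in> V\<^sub>\<sigma>" "gdist E\<^sub>\<sigma> X Y = gdist E\<^sub>\<sigma> X' Y'" for X Y X' Y' k
    unfolding quotient.sphere_inter_nbrs
  proof (rule card_eq_if_triangular_sums_eq[OF quotient.finite_nbrs quotient.finite_nbrs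
        block_profile_triangular block_profile_diag_pos])
    show "(\<Sum>Z\<in>{Z. E\<^sub>\<sigma> Y Z}. block_profile (gdist E\<^sub>\<sigma> X Z) s)
        = (\<Sum>Z\<in>{Z. E\<^sub>\<sigma> Y' Z}. block_profile (gdist E\<^sub>\<sigma> X' Z) s)" for s
      using sum_nbrs_block_profile[OF that(1,2)] sum_nbrs_block_profile[OF that(3,4)] that(5)
      by simp
  qed
  note same_counts = this
  show ?thesis
    unfolding distance_regular_def
  proof (intro conjI ballI impI quotient.graph quotient.connected)
    fix X Y X' Y' assume "X \<in> V\<^sub>\<sigma>" "Y \<in> V\<^sub>\<sigma>" "X' \<in> V\<^sub>\<sigma>" "Y' \<in> V\<^sub>\<sigma>"
      and eq: "gdist E\<^sub>\<sigma> X Y = gdist E\<^sub>\<sigma> X' Y'"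
    from same_counts[OF this] show
      "card (sphere V\<^sub>\<sigma> E\<^sub>\<sigma> (gdist E\<^sub>\<sigma> X Y - 1) X \<inter> {z. E\<^sub>\<sigma> Y z})
         = card (sphere V\<^sub>\<sigma> E\<^sub>\<sigma> (gdist E\<^sub>\<sigma> X' Y' - 1) X' \<inter> {z. E\<^sub>\<sigma> Y' z})"
      "card (sphere V\<^sub>\<sigma> E\<^sub>\<sigma> (gdist E\<^sub>\<sigma> X Y + 1) X \<inter> {z. E\<^sub>\<sigma> Y z})
         = card (sphere V\<^sub>\<sigma> E\<^sub>\<sigma> (gdist E\<^sub>\<sigma> X' Y' + 1) X' \<inter> {z. E\<^sub>\<sigma> Y' z})"
      unfolding eq by blast+
  qed
qed

lemma quotient_gdist_eq_diameter_iff: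
  assumes A: "A \<in> V\<^sub>\<sigma>" and B: "B \<in> V\<^sub>\<sigma>" and "A \<noteq> B"
  shows "gdist E\<^sub>\<sigma> A B = D \<longleftrightarrow> fst A = fst B"
proof -
  obtain a where a: "a \<in> V\<^sub>\<rho>" "proj a = A" using obtain_proj_preimage[OF A] .
  obtain b where b: "b \<in> fibre V\<^sub>\<rho> proj B" "gdist E\<^sub>\<rho> a b = gdist E\<^sub>\<sigma> A B"
    using block_gdist_bounds(1)[OF a(1) B] a(2) by blast
  have "b \<in> V\<^sub>\<rho>" "proj b = B" using b(1) by (auto simp: fibre_def)
  then have "a \<noteq> b" "fst a = fst A" "fst b = fst B"
    using a \<open>A \<noteq> B\<close> by (auto simp: proj_def split: prod.splits)
  then show ?thesis using cover.antipodal[OF a(1) \<open>b \<in> V\<^sub>\<rho>\<close>] b(2) by auto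
qed

lemma quotient_diameter: "diameter V\<^sub>\<sigma> E\<^sub>\<sigma> = D"
proof -
  have le: "gdist E\<^sub>\<sigma> A B \<le> D" if AB: "A \<in> V\<^sub>\<sigma>" "B \<in> V\<^sub>\<sigma>" for A B
  proof -
    obtain a where a: "a \<in> V\<^sub>\<rho>" "proj a = A" using obtain_proj_preimage[OF AB(1)] .
    obtain b where b: "b \<in> V\<^sub>\<rho>" "proj b = B" using obtain_proj_preimage[OF AB(2)] .
    show ?thesis
      using cover_gdist_le[OF proj_is_cover cover.connected a(1) b(1)]
        cover.gdist_le_diameter[OF a(1) b(1)] a(2) b(2)
      by simp
  qed
  obtain v where "v \<in> V" using cover.V_nonempty by auto
  then show ?thesis
    using m_gt_1 quotient_gdist_eq_diameter_iff[of "(v, 0)" "(v, 1)"]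
    by (intro quotient.diameter_eqI[OF le, of "(v, 0)" "(v, 1)"]) auto
qed

lemma quotient_antipodal_cover: "antipodal_cover V E V\<^sub>\<sigma> E\<^sub>\<sigma> fst m"
proof -
  have "(A = B \<or> gdist E\<^sub>\<sigma> A B = diameter V\<^sub>\<sigma> E\<^sub>\<sigma>) \<longleftrightarrow> fst A = fst B"
    if "A \<in> V\<^sub>\<sigma>" "B \<in> V\<^sub>\<sigma>" for A B
    using quotient_gdist_eq_diameter_iff[OF that] unfolding quotient_diameter by auto
  moreover have "\<not> complete_graph V E" using cover_antipodal by (simp add: antipodal_cover_def)
  ultimately show ?thesis
    unfolding antipodal_cover_def using quotient_r_cover quotient.connected by blast
qed

lemma proj_r_cover: "r_cover V\<^sub>\<sigma> E\<^sub>\<sigma> V\<^sub>\<rho> E\<^sub>\<rho> proj n"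
  unfolding r_cover_def using proj_is_cover card_block by blast

end

theorem theorem3p1:
  fixes V :: "'a set" and E :: "'a \<Rightarrow> 'a \<Rightarrow> bool" and T :: "'a set set"
    and m n :: nat and \<pi> :: "'a \<Rightarrow> 'a \<Rightarrow> nat \<Rightarrow> nat"
    and blk :: "nat \<Rightarrow> nat" and \<tau> :: "'a \<Rightarrow> 'a \<Rightarrow> nat \<Rightarrow> nat"
  assumes drg: "distance_regular V E"
    and noncomplete: "\<not> complete_graph V E"
    and tree: "spanning_tree V E T"
    and m_gt: "m > 1" and n_gt: "n > 1"
    and rho: "fg_rep V E T (m * n) \<pi>"
    and rho_trans: "transitive_rep E (m * n) \<pi>"
    and blocks_onto: "blk ` {0..<m * n} = {0..<m}"
    and blocks_size: "\<forall>k<m. card {i. i < m * n \<and> blk i = k} = n"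
    and blocks_inv: "\<forall>v w. E v w \<longrightarrow> (\<forall>i<m * n. \<forall>j<m * n.
                        blk i = blk j \<longrightarrow> blk (\<pi> v w i) = blk (\<pi> v w j))"
    and sigma: "\<forall>v w. E v w \<longrightarrow> (\<forall>i<m * n. \<tau> v w (blk i) = blk (\<pi> v w i))"
    and cover_drg: "distance_regular (V \<times> {0..<m * n}) (cover_graph V E (m * n) \<pi>)"
    and cover_antipodal: "antipodal_cover V E (V \<times> {0..<m * n}) (cover_graph V E (m * n) \<pi>) fst (m * n)"
  shows "r_cover (V \<times> {0..<m}) (cover_graph V E m \<tau>) (V \<times> {0..<m * n}) (cover_graph V E (m * n) \<pi>)
            (\<lambda>(v, i). (v, blk i)) n
       \<and> antipodal_cover V E (V \<times> {0..<m}) (cover_graph V E m \<tau>) fst m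
       \<and> distance_regular (V \<times> {0..<m}) (cover_graph V E m \<tau>)"
proof -
  interpret block_quotient V E m n \<pi> blk \<tau>
    using m_gt fg_rep_permutation_voltage[OF rho] blocks_onto blocks_size sigma cover_drg
      cover_antipodal
    by unfold_locales auto
  show ?thesis
    using proj_r_cover quotient_antipodal_cover quotient_distance_regular by (simp add: proj_def)
qed
end
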